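(* Assume $a+b\ge1$. Then, conditionally on $(\omega',\sigma')$, the configuration $\omega$ is distributed like $\eta(\sigma')\cup\zeta$, where $\zeta$ is a Bernoulli bond percolation on $(\omega')^\dagger$ with success probability $\frac{1-b}{a}$ (each edge of $(\omega')^\dagger$ included independently with this probability).
   Context: Let $M$ be a compact orientable surface without boundary, or the plane. Let $\mathsf G=(\mathsf V,\mathsf E)$ be a finite connected graph embedded in $M$ with all faces topological discs, and $\mathsf G^*=(\mathsf U,\mathsf E^* )$ its embedded dual ($\mathsf U$ = faces of $\mathsf G$); $e^*$ is the dual edge crossing $e$ (and $(e^* )^*=e$), $\xi^*=\{e^*:e\in\xi\}$, and for $\xi\subseteq\mathsf E^*$, $\xi^\dagger=\mathsf E\setminus\xi^*$. Fix integers $q,q'\ge1$, finite $Q,Q'\subset\mathbb C$ with $Q=-Q$, $Q'=-Q'$, $|Q|=q$, $|Q'|=q'$, and $a,b\in(0,1]$. For $\sigma:\mathsf V\to Q$, $\eta(\sigma)\subseteq\mathsf E^*$ is the set of $e^*$ whose primal $e$ has endpoints with different $\sigma$-values; for $\sigma':\mathsf U\to Q'$, $\eta(\sigma')\subseteq\mathsf E$ is the set of $e$ whose dual $e^*$ has endpoints with different $\sigma'$-values. $\mathbf P(\sigma,\sigma')\propto a^{|\eta(\sigma')|}b^{|\eta(\sigma)|}$ on $\Sigma=\{(\sigma,\sigma'):\eta(\sigma)^*\cap\eta(\sigma')=\emptyset\}$. Percolation (for $a+b\ge1$): given $(\sigma,\sigma')$, every edge of $\eta(\sigma')$ and every dual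 edge of $\eta(\sigma)$ is open; for each pair $(e,e^* )$ with $e\notin\eta(\sigma')$, $e^*\notin\eta(\sigma)$, independently, ($e$ open, $e^*$ closed) w.p. $1-b$, ($e$ closed, $e^*$ open) w.p. $1-a$, both closed w.p. $a+b-1$. $\omega\subseteq\mathsf E$ and $\omega'\subseteq\mathsf E^*$ are the sets of open primal and dual edges, with joint law $\mathbf P$. *)

theory Defs
  imports "HOL-Library.FuncSet" Complex_Main
begin

text \<open>Combinatorial encoding of a finite connected graph cellularly embedded in a
compact orientable surface (or the plane, i.e. the sphere), together with its dual.
Primal edges are indexed by a set E; the dual edge e* is identified with its index e.
ends e = the two endpoints (vertices) of e; dends e = the two endpoints (faces) of e*.
The embedding is encoded by a rotation system on darts E \<times> bool (Heffter--Edmonds):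
vertices are the orbits of the rotation phi, faces are the orbits of phi \<circ> alpha,
where alpha flips the two darts of an edge.\<close>

definition dart_alpha :: "'e \<times> bool \<Rightarrow> 'e \<times> bool" where
  "dart_alpha d = (fst d, \<not> snd d)"

definition dart_vtx :: "('e \<Rightarrow> 'v \<times> 'v) \<Rightarrow> 'e \<times> bool \<Rightarrow> 'v" where
  "dart_vtx ends d = (if snd d then fst (ends (fst d)) else snd (ends (fst d)))"

definition dart_face :: "('e \<Rightarrow> 'u \<times> 'u) \<Rightarrow> 'e \<times> bool \<Rightarrow> 'u" where
  "dart_face dends d = (if snd d then fst (dends (fst d)) else snd (dends (fst d)))"

definition graph_adj :: "'e set \<Rightarrow> ('e \<Rightarrow> 'v \<times> 'v) \<Rightarrow> ('v \<times> 'v) set" where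
  "graph_adj E ends = (\<Union>e\<in>E. {ends e, prod.swap (ends e)})"

definition cellularly_embedded_with_dual ::
  "'v set \<Rightarrow> 'u set \<Rightarrow> 'e set \<Rightarrow> ('e \<Rightarrow> 'v \<times> 'v) \<Rightarrow> ('e \<Rightarrow> 'u \<times> 'u) \<Rightarrow> bool" where
  "cellularly_embedded_with_dual V U E ends dends \<longleftrightarrow>
     finite V \<and> finite U \<and> finite E \<and> V \<noteq> {} \<and>
     (\<forall>e\<in>E. fst (ends e) \<in> V \<and> snd (ends e) \<in> V) \<and>
     (\<forall>e\<in>E. fst (dends e) \<in> U \<and> snd (dends e) \<in> U) \<and>
     (\<forall>v\<in>V. \<forall>w\<in>V. (v, w) \<in> (graph_adj E ends)\<^sup>*) \<and>
     (E = {} \<longrightarrow> card V = 1 \<and> card U = 1) \<and>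
     (E \<noteq> {} \<longrightarrow>
       (let D = E \<times> (UNIV :: bool set) in
        (\<exists>phi. bij_betw phi D D \<and>
           (\<forall>d\<in>D. dart_vtx ends (phi d) = dart_vtx ends d) \<and>
           (\<forall>d\<in>D. \<forall>d'\<in>D. dart_vtx ends d = dart_vtx ends d' \<longrightarrow> (\<exists>n. (phi ^^ n) d = d')) \<and>
           (\<forall>d\<in>D. dart_face dends (phi (dart_alpha d)) = dart_face dends d) \<and>
           (\<forall>d\<in>D. \<forall>d'\<in>D. dart_face dends d = dart_face dends d' \<longrightarrow>
               (\<exists>n. ((phi \<circ> dart_alpha) ^^ n) d = d')) \<and>
           dart_face dends ` D = U)))"

text \<open>eta_primal: the set of (indices of) dual edges e* such that sigma differs on the
endpoints of e, i.e. eta(sigma) (as a subset of E via e* \<leftrightarrow> e).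
eta_dual: eta(sigma'), the set of primal edges e whose dual has endpoints with different sigma'.\<close>

definition eta_primal :: "'e set \<Rightarrow> ('e \<Rightarrow> 'v \<times> 'v) \<Rightarrow> ('v \<Rightarrow> complex) \<Rightarrow> 'e set" where
  "eta_primal E ends \<sigma> = {e \<in> E. \<sigma> (fst (ends e)) \<noteq> \<sigma> (snd (ends e))}"

definition eta_dual :: "'e set \<Rightarrow> ('e \<Rightarrow> 'u \<times> 'u) \<Rightarrow> ('u \<Rightarrow> complex) \<Rightarrow> 'e set" where
  "eta_dual E dends \<sigma>' = {e \<in> E. \<sigma>' (fst (dends e)) \<noteq> \<sigma>' (snd (dends e))}"

definition spin_weight :: "real \<Rightarrow> real \<Rightarrow> 'e set \<Rightarrow> ('e \<Rightarrow> 'v \<times> 'v) \<Rightarrow> ('e \<Rightarrow> 'u \<times> 'u)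
    \<Rightarrow> ('v \<Rightarrow> complex) \<Rightarrow> ('u \<Rightarrow> complex) \<Rightarrow> real" where
  "spin_weight a b E ends dends \<sigma> \<sigma>' =
     (if eta_primal E ends \<sigma> \<inter> eta_dual E dends \<sigma>' = {}
      then a ^ card (eta_dual E dends \<sigma>') * b ^ card (eta_primal E ends \<sigma>) else 0)"

text \<open>Conditional law of (omega, omega') given (sigma, sigma'), with omega \<subseteq> E the open
primal edges and omega' \<subseteq> E the (indices of) open dual edges.\<close>
definition perc_kernel :: "real \<Rightarrow> real \<Rightarrow> 'e set \<Rightarrow> 'e set \<Rightarrow> 'e set \<Rightarrow> 'e set \<Rightarrow> 'e set \<Rightarrow> real" where
  "perc_kernel a b E etaS etaS' \<omega> \<omega>' =
     (if etaS' \<subseteq> \<omega> \<and> etaS \<subseteq> \<omega>' \<and> \<omega> \<inter> \<omega>' = {} \<and> \<omega> \<subseteq> E \<and> \<omega>' \<subseteq> E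
      then (1 - b) ^ card (\<omega> - etaS') * (1 - a) ^ card (\<omega>' - etaS)
           * (a + b - 1) ^ card (E - \<omega> - \<omega>')
      else 0)"

definition partition_fn :: "'v set \<Rightarrow> 'u set \<Rightarrow> 'e set \<Rightarrow> ('e \<Rightarrow> 'v \<times> 'v) \<Rightarrow> ('e \<Rightarrow> 'u \<times> 'u)
    \<Rightarrow> complex set \<Rightarrow> complex set \<Rightarrow> real \<Rightarrow> real \<Rightarrow> real" where
  "partition_fn V U E ends dends Q Q' a b =
     (\<Sum>\<sigma>\<in>PiE V (\<lambda>_. Q). \<Sum>\<sigma>'\<in>PiE U (\<lambda>_. Q'). spin_weight a b E ends dends \<sigma> \<sigma>')"

definition joint_prob :: "'v set \<Rightarrow> 'u set \<Rightarrow> 'e set \<Rightarrow> ('e \<Rightarrow> 'v \<times> 'v) \<Rightarrow> ('e \<Rightarrow> 'u \<times> 'u)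
    \<Rightarrow> complex set \<Rightarrow> complex set \<Rightarrow> real \<Rightarrow> real
    \<Rightarrow> ('v \<Rightarrow> complex) \<Rightarrow> ('u \<Rightarrow> complex) \<Rightarrow> 'e set \<Rightarrow> 'e set \<Rightarrow> real" where
  "joint_prob V U E ends dends Q Q' a b \<sigma> \<sigma>' \<omega> \<omega>' =
     (if \<sigma> \<in> PiE V (\<lambda>_. Q) \<and> \<sigma>' \<in> PiE U (\<lambda>_. Q')
      then spin_weight a b E ends dends \<sigma> \<sigma>'
           * perc_kernel a b E (eta_primal E ends \<sigma>) (eta_dual E dends \<sigma>') \<omega> \<omega>'
           / partition_fn V U E ends dends Q Q' a b
      else 0)"

definition prob_dual_cond :: "'v set \<Rightarrow> 'u set \<Rightarrow> 'e set \<Rightarrow> ('e \<Rightarrow> 'v \<times> 'v) \<Rightarrow> ('e \<Rightarrow> 'u \<times> 'u)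
    \<Rightarrow> complex set \<Rightarrow> complex set \<Rightarrow> real \<Rightarrow> real \<Rightarrow> ('u \<Rightarrow> complex) \<Rightarrow> 'e set \<Rightarrow> real" where
  "prob_dual_cond V U E ends dends Q Q' a b s' B =
     (\<Sum>\<sigma>\<in>PiE V (\<lambda>_. Q). \<Sum>\<omega>\<in>Pow E. joint_prob V U E ends dends Q Q' a b \<sigma> s' \<omega> B)"

definition prob_primal_dual :: "'v set \<Rightarrow> 'u set \<Rightarrow> 'e set \<Rightarrow> ('e \<Rightarrow> 'v \<times> 'v) \<Rightarrow> ('e \<Rightarrow> 'u \<times> 'u)
    \<Rightarrow> complex set \<Rightarrow> complex set \<Rightarrow> real \<Rightarrow> real \<Rightarrow> ('u \<Rightarrow> complex) \<Rightarrow> 'e set \<Rightarrow> 'e set \<Rightarrow> real" where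
  "prob_primal_dual V U E ends dends Q Q' a b s' A B =
     (\<Sum>\<sigma>\<in>PiE V (\<lambda>_. Q). joint_prob V U E ends dends Q Q' a b \<sigma> s' A B)"

definition bern_union_law :: "real \<Rightarrow> 'e set \<Rightarrow> 'e set \<Rightarrow> 'e set \<Rightarrow> real" where
  "bern_union_law p S eta A =
     (\<Sum>\<zeta>\<in>Pow S. if eta \<union> \<zeta> = A then p ^ card \<zeta> * (1 - p) ^ (card S - card \<zeta>) else 0)"

end

theory Submission
  imports Defs
begin

text \<open>Given \<sigma>' and \<omega>' = B, the weight of (\<sigma>, \<omega>) factorises into a function of \<sigma> times
  (1-b)^|\<omega> - \<eta>(\<sigma>')| (a+b-1)^|(E - B) - \<omega>| for \<eta>(\<sigma>') \<subseteq> \<omega> \<subseteq> E - B, and 0 otherwise.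
  Summing out \<omega> gives a^|(E - B) - \<eta>(\<sigma>')| by the binomial theorem, since (1-b) + (a+b-1) = a.
  Dividing by this normaliser turns each factor (1-b) into p = (1-b)/a and each factor
  (a+b-1) into 1 - p, which is the law of \<eta>(\<sigma>') \<union> \<zeta> for \<zeta> Bernoulli(p) on E - B.\<close>

definition interval_weight :: "'a::comm_semiring_1 \<Rightarrow> 'a \<Rightarrow> 'e set \<Rightarrow> 'e set \<Rightarrow> 'e set \<Rightarrow> 'a" where
  "interval_weight x y D S W =
     (if D \<subseteq> W \<and> W \<subseteq> S then x ^ card (W - D) * y ^ card (S - W) else 0)"

lemma sum_Pow_power_card:
  fixes x y :: "'a::comm_semiring_1"
  assumes "finite S"
  shows "(\<Sum>Z\<in>Pow S. x ^ card Z * y ^ card (S - Z)) = (x + y) ^ card S"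
  using prod_add[OF assms, of "\<lambda>_. x" "\<lambda>_. y"] by simp

lemma sum_interval_weight:
  assumes "finite T" "S \<subseteq> T" "D \<subseteq> S"
  shows "(\<Sum>W\<in>Pow T. interval_weight x y D S W) = (x + y) ^ card (S - D)"
proof -
  have interval: "{W \<in> Pow T. D \<subseteq> W \<and> W \<subseteq> S} = (\<lambda>Z. D \<union> Z) ` Pow (S - D)"
  proof (intro equalityI subsetI)
    fix W assume "W \<in> {W \<in> Pow T. D \<subseteq> W \<and> W \<subseteq> S}"
    then have "W = D \<union> (W - D)" "W - D \<in> Pow (S - D)" by auto
    then show "W \<in> (\<lambda>Z. D \<union> Z) ` Pow (S - D)" by blast
  qed (use assms in auto)
  have inj: "inj_on (\<lambda>Z. D \<union> Z) (Pow (S - D))"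
    by (rule inj_onI) blast
  have "(\<Sum>W\<in>Pow T. interval_weight x y D S W)
      = (\<Sum>W\<in>{W \<in> Pow T. D \<subseteq> W \<and> W \<subseteq> S}. x ^ card (W - D) * y ^ card (S - W))"
    unfolding interval_weight_def by (rule sum.inter_filter[symmetric]) (use assms(1) in simp)
  also have "\<dots> = (\<Sum>Z\<in>Pow (S - D). x ^ card (D \<union> Z - D) * y ^ card (S - (D \<union> Z)))"
    unfolding interval by (simp add: sum.reindex[OF inj])
  also have "\<dots> = (\<Sum>Z\<in>Pow (S - D). x ^ card Z * y ^ card (S - D - Z))"
    by (intro sum.cong refl) (auto intro!: arg_cong2[where f = "\<lambda>m n. x ^ card m * y ^ card n"])
  also have "\<dots> = (x + y) ^ card (S - D)"
    using assms by (intro sum_Pow_power_card) (auto intro: finite_subset)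
  finally show ?thesis .
qed

lemma card_interval_split:
  assumes "finite S" "D \<subseteq> W" "W \<subseteq> S"
  shows "card (S - D) = card (W - D) + card (S - W)"
proof -
  have "S - D = (W - D) \<union> (S - W)" "(W - D) \<inter> (S - W) = {}"
    using assms by auto
  moreover have "finite (W - D)" "finite (S - W)"
    using assms by (auto intro: finite_subset)
  ultimately show ?thesis
    by (simp add: card_Un_disjoint)
qed

lemma interval_weight_scale:
  assumes "finite S"
  shows "interval_weight (c * x) (c * y) D S W = c ^ card (S - D) * interval_weight x y D S W"
proof (cases "D \<subseteq> W \<and> W \<subseteq> S")
  case True
  then show ?thesis
    using card_interval_split[OF assms, of D W]
    by (simp add: interval_weight_def power_mult_distrib power_add algebra_simps)
qed (auto simp: interval_weight_def)

lemma bern_union_law_eq_interval_weight: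
  fixes p :: real
  assumes "finite S" "D \<subseteq> S"
  shows "bern_union_law p S D A = interval_weight p (1 - p) D S A"
proof (cases "D \<subseteq> A \<and> A \<subseteq> S")
  case False
  then have "D \<union> \<zeta> \<noteq> A" if "\<zeta> \<in> Pow S" for \<zeta>
    using assms that by auto
  then have "bern_union_law p S D A = 0"
    by (simp add: bern_union_law_def)
  with False show ?thesis
    by (auto simp: interval_weight_def)
next
  case True
  \<comment> \<open>The \<zeta> with D \<union> \<zeta> = A form the interval from A - D to A.\<close>
  define c where "c = p ^ card (A - D) * (1 - p) ^ card (S - A)"
  have summand: "(if D \<union> \<zeta> = A then p ^ card \<zeta> * (1 - p) ^ (card S - card \<zeta>) else 0)
      = c * interval_weight p (1 - p) (A - D) A \<zeta>" if "\<zeta> \<in> Pow S" for \<zeta>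
  proof (cases "A - D \<subseteq> \<zeta> \<and> \<zeta> \<subseteq> A")
    case in_interval: True
    have fin: "finite A" "finite \<zeta>"
      using True that assms(1) by (auto intro: finite_subset)
    have "card S - card \<zeta> = card (S - \<zeta>)"
      using that fin by (simp add: card_Diff_subset)
    moreover have "card \<zeta> = card (A - D) + card (\<zeta> - (A - D))"
      using card_interval_split[of \<zeta> "{}" "A - D"] in_interval fin by simp
    moreover have "card (S - \<zeta>) = card (A - \<zeta>) + card (S - A)"
      using card_interval_split[of S \<zeta> A] in_interval True assms(1) by simp
    moreover have "D \<union> \<zeta> = A"
      using in_interval True by auto
    ultimately show ?thesis
      using in_interval by (simp add: c_def interval_weight_def power_add)
  next
    case False
    then have "D \<union> \<zeta> \<noteq> A" by auto
    with False show ?thesis by (auto simp: interval_weight_def)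
  qed
  have "bern_union_law p S D A = c * (\<Sum>\<zeta>\<in>Pow S. interval_weight p (1 - p) (A - D) A \<zeta>)"
    unfolding bern_union_law_def sum_distrib_left by (rule sum.cong) (simp_all add: summand)
  also have "\<dots> = c"
    using True assms(1) by (subst sum_interval_weight) auto
  finally show ?thesis
    using True by (simp add: c_def interval_weight_def)
qed

lemma perc_kernel_factor:
  "perc_kernel a b E etaS etaS' \<omega> \<omega>'
     = (if etaS \<subseteq> \<omega>' \<and> \<omega>' \<subseteq> E then (1 - a) ^ card (\<omega>' - etaS) else 0)
       * interval_weight (1 - b) (a + b - 1) etaS' (E - \<omega>') \<omega>"
proof -
  have "E - \<omega> - \<omega>' = E - \<omega>' - \<omega>" by auto
  then show ?thesis
    unfolding perc_kernel_def interval_weight_def by auto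
qed

lemma prob_given_dual_factor:
  fixes E B :: "'e set" and dends :: "'e \<Rightarrow> 'u \<times> 'u" and a b :: real
  assumes "s' \<in> PiE U (\<lambda>_. Q')"
  defines "w \<equiv> interval_weight (1 - b) (a + b - 1) (eta_dual E dends s') (E - B)"
  obtains H where "prob_primal_dual V U E ends dends Q Q' a b s' A B = H * w A"
    and "prob_dual_cond V U E ends dends Q Q' a b s' B = H * sum w (Pow E)"
proof
  define h where "h \<sigma> = (if \<sigma> \<in> PiE V (\<lambda>_. Q)
       then spin_weight a b E ends dends \<sigma> s'
            * (if eta_primal E ends \<sigma> \<subseteq> B \<and> B \<subseteq> E
               then (1 - a) ^ card (B - eta_primal E ends \<sigma>) else 0)
            / partition_fn V U E ends dends Q Q' a b
       else 0)" for \<sigma>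
  have factor: "joint_prob V U E ends dends Q Q' a b \<sigma> s' \<omega> B = h \<sigma> * w \<omega>" for \<sigma> \<omega>
    using assms unfolding joint_prob_def perc_kernel_factor h_def w_def by simp
  show "prob_primal_dual V U E ends dends Q Q' a b s' A B = sum h (PiE V (\<lambda>_. Q)) * w A"
    unfolding prob_primal_dual_def factor by (simp add: sum_distrib_right)
  show "prob_dual_cond V U E ends dends Q Q' a b s' B = sum h (PiE V (\<lambda>_. Q)) * sum w (Pow E)"
    unfolding prob_dual_cond_def factor by (simp add: sum_product)
qed

theorem lemma5p5:
  fixes V :: "'v set" and U :: "'u set" and E :: "'e set"
    and ends :: "'e \<Rightarrow> 'v \<times> 'v" and dends :: "'e \<Rightarrow> 'u \<times> 'u"
    and Q Q' :: "complex set" and q q' :: nat and a b :: real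
    and s' :: "'u \<Rightarrow> complex" and B A :: "'e set"
  assumes emb: "cellularly_embedded_with_dual V U E ends dends"
    and "q \<ge> 1" and "q' \<ge> 1"
    and "finite Q" and "finite Q'" and "card Q = q" and "card Q' = q'"
    and "uminus ` Q = Q" and "uminus ` Q' = Q'"
    and "0 < a" and "a \<le> 1" and "0 < b" and "b \<le> 1"
    and "a + b \<ge> 1"
    and "s' \<in> PiE U (\<lambda>_. Q')"
    and pos: "prob_dual_cond V U E ends dends Q Q' a b s' B > 0"
  shows "prob_primal_dual V U E ends dends Q Q' a b s' A B
           / prob_dual_cond V U E ends dends Q Q' a b s' B
         = bern_union_law ((1 - b) / a) (E - B) (eta_dual E dends s') A"
proof -
  have finE: "finite E"
    using emb unfolding cellularly_embedded_with_dual_def by simp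
  define \<eta> where "\<eta> = eta_dual E dends s'"
  define p where "p = (1 - b) / a"
  define w where "w = interval_weight (1 - b) (a + b - 1) \<eta> (E - B)"
  obtain H where primal: "prob_primal_dual V U E ends dends Q Q' a b s' A B = H * w A"
    and dual: "prob_dual_cond V U E ends dends Q Q' a b s' B = H * sum w (Pow E)"
    using prob_given_dual_factor[OF \<open>s' \<in> PiE U (\<lambda>_. Q')\<close>] unfolding w_def \<eta>_def by blast
  have "\<eta> \<subseteq> E - B"
  proof (rule ccontr)
    assume "\<not> \<eta> \<subseteq> E - B"
    then have "w = (\<lambda>_. 0)"
      unfolding w_def interval_weight_def by fastforce
    with pos dual show False by simp
  qed
  have normaliser: "sum w (Pow E) = a ^ card (E - B - \<eta>)"
    using sum_interval_weight[OF finE _ \<open>\<eta> \<subseteq> E - B\<close>, of "1 - b" "a + b - 1"]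
    unfolding w_def by simp
  have "a * p = 1 - b" "a * (1 - p) = a + b - 1"
    using \<open>0 < a\<close> unfolding p_def by (simp_all add: field_simps)
  then have rescaled: "w A = a ^ card (E - B - \<eta>) * interval_weight p (1 - p) \<eta> (E - B) A"
    using interval_weight_scale[of "E - B" a p "1 - p" \<eta> A] finE unfolding w_def by simp
  have "H \<noteq> 0"
    using pos dual by auto
  then show ?thesis
    using primal dual normaliser rescaled \<open>0 < a\<close> \<open>\<eta> \<subseteq> E - B\<close> finE
    by (simp add: bern_union_law_eq_interval_weight \<eta>_def p_def)
qed

end
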